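(* The morphism of operads $MagFine\to\mathrm{Prim}\,Mag$, $m^n_i\mapsto\mu^n_i$, is injective. Equivalently, for every vector space $V$, the unique $MagFine$-algebra morphism from the free $MagFine$-algebra $MagFine(V)$ to $Mag(V)$ (the latter viewed as a $MagFine$-algebra via $m^n_i\mapsto\mu^n_i$) extending the inclusion $V\subset Mag(V)$ is injective (its image consists of primitive elements).
   Context: $Mag(V)=\bigoplus_{n\ge0}\mathbb K[Y_{n-1}]\otimes V^{\otimes n}$ is the free unital magmatic algebra on $V$ ($Y_{n-1}$ = planar binary rooted trees with $n$ leaves, product by grafting on a new root), equipped with the unique coproduct $\Delta$ with $\Delta(1)=1\otimes1$, $\Delta(v)=v\otimes1+1\otimes v$ ($v\in V$), $\Delta(x\cdot y)=\Delta(x)\cdot(1\otimes y)+(x\otimes1)\cdot\Delta(y)-x\otimes y$; primitive elements are $x$ in the augmentation ideal with $\Delta(x)=x\otimes1+1\otimes x$, and $\mathrm{Prim}\,Mag$ is the operad of operations of $Mag$ whose evaluations on elements of $V$ are primitive. A $MagFine$-algebra is a vector space with multilinear operations $m^n_i$ of arity $n$, $n\ge3$, $1\le i\le n-2$, satisfying no relations; $MagFine$ is the associated free operad. In a magmatic algebra: $\omega^1(x)=x$, $\omega^n(x_1,\dots,x_n)=\omega^{n-1}(x_1,\dots,x_{n-1})\cdot x_n$; $as(x,y,z)=(x\cdot y)\cdot z-x\cdot(y\cdot z)$; $\mu^3_1=as$, $\mu^n_1(x_1,\dots,x_n)=as(x_1,\omega^{n-2}(x_2,\dots,x_{n-1}),x_n)$,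 $\mu^4_2(x_1,\dots,x_4)=as(x_1,x_2,x_3\cdot x_4)-as(x_1,x_2,x_3)\cdot x_4$, and for $2\le i\le n-2$, $\mu^n_i(x_1,\dots,x_n)=\mu^4_2(x_1,\omega^{n-i-1}(x_2,\dots,x_{n-i}),\omega^{i-1}(x_{n-i+1},\dots,x_{n-1}),x_n)$. *)

theory Defs
  imports Main
begin

text \<open>V is the vector space with basis the type 'x.  A basis of Mag(V) (augmentation
ideal) is given by planar binary rooted trees whose leaves are labelled by basis
vectors of V.  Elements of Mag(V) are represented by their coefficient functions
(finitely supported) on this basis.\<close>

datatype 'x mtree = MLeaf 'x | MNode "'x mtree" "'x mtree"

type_synonym ('x, 'k) mag = "'x mtree \<Rightarrow> 'k"

definition mgen :: "'x \<Rightarrow> ('x, 'k::field) mag" where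
  "mgen x = (\<lambda>t. if t = MLeaf x then 1 else 0)"

text \<open>The magmatic product (grafting onto a new root), extended bilinearly.\<close>
fun mmul :: "('x, 'k::field) mag \<Rightarrow> ('x, 'k) mag \<Rightarrow> ('x, 'k) mag" where
  "mmul f g (MLeaf x) = 0"
| "mmul f g (MNode a b) = f a * g b"

definition msub :: "('x, 'k::field) mag \<Rightarrow> ('x, 'k) mag \<Rightarrow> ('x, 'k) mag" where
  "msub f g = (\<lambda>t. f t - g t)"

definition mas :: "('x, 'k::field) mag \<Rightarrow> ('x, 'k) mag \<Rightarrow> ('x, 'k) mag \<Rightarrow> ('x, 'k) mag" where
  "mas x y z = msub (mmul (mmul x y) z) (mmul x (mmul y z))"

fun momega :: "('x, 'k::field) mag list \<Rightarrow> ('x, 'k) mag" where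
  "momega [] = (\<lambda>_. 0)"
| "momega (x # xs) = foldl mmul x xs"

definition mmu42 :: "('x, 'k::field) mag \<Rightarrow> ('x, 'k) mag \<Rightarrow> ('x, 'k) mag \<Rightarrow> ('x, 'k) mag \<Rightarrow> ('x, 'k) mag" where
  "mmu42 x1 x2 x3 x4 = msub (mas x1 x2 (mmul x3 x4)) (mmul (mas x1 x2 x3) x4)"

text \<open>mu^n_i(x_1,...,x_n) with n = length xs (0-based list indexing: x_k = xs ! (k-1)).\<close>
definition mmu :: "nat \<Rightarrow> ('x, 'k::field) mag list \<Rightarrow> ('x, 'k) mag" where
  "mmu i xs = (let n = length xs in
     if i = 1 then mas (xs ! 0) (momega (take (n - 2) (drop 1 xs))) (xs ! (n - 1))
     else mmu42 (xs ! 0) (momega (take (n - i - 1) (drop 1 xs)))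
                (momega (take (i - 1) (drop (n - i) xs))) (xs ! (n - 1)))"

text \<open>Basis: trees whose internal nodes are labelled by generating operations m^n_i,
where n (the arity) is the number of children, n \<ge> 3, 1 \<le> i \<le> n-2, and whose leaves
are labelled by basis vectors of V.\<close>

datatype 'x ftree = FLeaf 'x | FNode nat "'x ftree list"

fun fvalid :: "'x ftree \<Rightarrow> bool" where
  "fvalid (FLeaf x) = True"
| "fvalid (FNode i ts) = (3 \<le> length ts \<and> 1 \<le> i \<and> i \<le> length ts - 2 \<and> (\<forall>t\<in>set ts. fvalid t))"

fun feval :: "'x ftree \<Rightarrow> ('x, 'k::field) mag" where
  "feval (FLeaf x) = mgen x"
| "feval (FNode i ts) = mmu i (map feval ts)"

definition magfine_elems :: "('x ftree \<Rightarrow> 'k::field) set" where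
  "magfine_elems = {c. finite {t. c t \<noteq> 0} \<and> (\<forall>t. c t \<noteq> 0 \<longrightarrow> fvalid t)}"

definition magfine_to_mag :: "('x ftree \<Rightarrow> 'k::field) \<Rightarrow> ('x, 'k) mag" where
  "magfine_to_mag c = (\<lambda>s. \<Sum>t\<in>{t. c t \<noteq> 0}. c t * feval t s)"

end

theory Submission
  imports Defs
begin

(* Let W be the span of the MagFine trees and T(W) the space of linear combinations of words
   in these trees.  Deform concatenation into a magmatic product on T(W),
     u star v = uv + sum (r < |u|, 2 <= j <= |v|) u_{<r} M(u_{>=r}, v_{<=j}) v_{>j},
   where the correction table M is built by recursion on |a| + |b| such that, computed with
   star, every mu^n_i sends the one-letter words t_1, ..., t_n to the one-letter word
   m^n_i(t_1, ..., t_n).  The magma morphism Psi from Mag(V) to (T(W), star) extending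
   V -> W then maps the image of each MagFine tree t back to the word t, so taking
   coefficients of one-letter words is a left inverse of MagFine(V) -> Mag(V). *)

(* Vectors of the free vector space on 'b, as lists of (coefficient, basis element) pairs;
   lc_eq identifies lists representing the same vector. *)
type_synonym ('k, 'b) lincomb = "('k \<times> 'b) list"

definition lc_sum :: "('k::field, 'b) lincomb \<Rightarrow> ('b \<Rightarrow> 'k) \<Rightarrow> 'k" where
  "lc_sum X G = sum_list (map (\<lambda>(c, u). c * G u) X)"

definition lc_eq :: "('k::field, 'b) lincomb \<Rightarrow> ('k, 'b) lincomb \<Rightarrow> bool" where
  "lc_eq X Y \<longleftrightarrow> (\<forall>G. lc_sum X G = lc_sum Y G)"

definition lc_coeff :: "('k::field, 'b) lincomb \<Rightarrow> 'b \<Rightarrow> 'k" where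
  "lc_coeff X w = lc_sum X (\<lambda>u. if u = w then 1 else 0)"

definition lc_scale :: "'k::field \<Rightarrow> ('k, 'b) lincomb \<Rightarrow> ('k, 'b) lincomb" where
  "lc_scale a X = map (\<lambda>(c, u). (a * c, u)) X"

definition lc_diff :: "('k::field, 'b) lincomb \<Rightarrow> ('k, 'b) lincomb \<Rightarrow> ('k, 'b) lincomb" where
  "lc_diff X Y = X @ lc_scale (-1) Y"

definition lc_bind :: "('b \<Rightarrow> ('k::field, 'c) lincomb) \<Rightarrow> ('k, 'b) lincomb \<Rightarrow> ('k, 'c) lincomb" where
  "lc_bind h X = concat (map (\<lambda>(c, u). lc_scale c (h u)) X)"

lemma lc_sum_Nil [simp]: "lc_sum [] G = 0"
  by (simp add: lc_sum_def)

lemma lc_sum_Cons [simp]: "lc_sum ((c, u) # X) G = c * G u + lc_sum X G"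
  by (simp add: lc_sum_def)

lemma lc_sum_append [simp]: "lc_sum (X @ Y) G = lc_sum X G + lc_sum Y G"
  by (simp add: lc_sum_def)

lemma lc_sum_concat_map: "lc_sum (concat (map f xs)) G = sum_list (map (\<lambda>x. lc_sum (f x) G) xs)"
  by (induction xs) auto

lemma lc_sum_map_basis: "lc_sum (map (\<lambda>(c, u). (c, h u)) X) G = lc_sum X (\<lambda>u. G (h u))"
  by (induction X) auto

lemma lc_sum_scale [simp]: "lc_sum (lc_scale a X) G = a * lc_sum X G"
  by (induction X) (auto simp: lc_scale_def algebra_simps)

lemma lc_sum_diff [simp]: "lc_sum (lc_diff X Y) G = lc_sum X G - lc_sum Y G"
  by (simp add: lc_diff_def)

lemma lc_sum_bind [simp]: "lc_sum (lc_bind h X) G = lc_sum X (\<lambda>u. lc_sum (h u) G)"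
  by (induction X) (auto simp: lc_bind_def)

lemma lc_sum_zero [simp]: "lc_sum X (\<lambda>u. 0) = 0"
  by (induction X) auto

lemma lc_sum_cmult: "lc_sum X (\<lambda>u. a * G u) = a * lc_sum X G"
  by (induction X) (auto simp: algebra_simps)

lemma lc_sum_multc: "lc_sum X (\<lambda>u. G u * a) = lc_sum X G * a"
  by (induction X) (auto simp: algebra_simps)

lemma lc_sum_add: "lc_sum X (\<lambda>u. F u + G u) = lc_sum X F + lc_sum X G"
  by (induction X) (auto simp: algebra_simps)

lemma lc_sum_swap: "lc_sum X (\<lambda>u. lc_sum Y (F u)) = lc_sum Y (\<lambda>v. lc_sum X (\<lambda>u. F u v))"
  by (induction X) (auto simp: lc_sum_add lc_sum_cmult)

lemma lc_sum_cong: "(\<And>u. u \<in> snd ` set X \<Longrightarrow> F u = G u) \<Longrightarrow> lc_sum X F = lc_sum X G"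
  by (induction X) auto

lemma lc_sum_eq_sum_coeff:
  assumes "finite U" and "snd ` set X \<subseteq> U"
  shows "lc_sum X G = (\<Sum>u\<in>U. lc_coeff X u * G u)"
  using assms(2)
proof (induction X)
  case Nil
  then show ?case by (simp add: lc_coeff_def)
next
  case (Cons p X)
  obtain c v where p: "p = (c, v)" by fastforce
  have "(\<Sum>u\<in>U. lc_coeff (p # X) u * G u) = (\<Sum>u\<in>U. (if u = v then c * G u else 0) + lc_coeff X u * G u)"
    by (intro sum.cong) (auto simp: p lc_coeff_def algebra_simps)
  also have "\<dots> = c * G v + (\<Sum>u\<in>U. lc_coeff X u * G u)"
    using Cons.prems assms(1) by (simp add: p sum.distrib)
  finally show ?case using Cons by (simp add: p)
qed

lemma lc_coeff_eq_0: "w \<notin> snd ` set X \<Longrightarrow> lc_coeff X w = 0"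
  by (induction X) (auto simp: lc_coeff_def)

lemma lc_scale_one [simp]: "lc_scale 1 X = X"
  by (induction X) (auto simp: lc_scale_def)

lemma lc_bind_single [simp]: "lc_bind h [(c, u)] = lc_scale c (h u)"
  by (simp add: lc_bind_def)

lemma lc_bind_cong: "(\<And>u. u \<in> snd ` set X \<Longrightarrow> h u = h' u) \<Longrightarrow> lc_bind h X = lc_bind h' X"
  by (induction X) (auto simp: lc_bind_def)

lemma lc_eq_trans: "lc_eq X Y \<Longrightarrow> lc_eq Y Z \<Longrightarrow> lc_eq X Z"
  by (simp add: lc_eq_def)

definition lc_graft :: "('k::field, 'x mtree) lincomb \<Rightarrow> ('k, 'x mtree) lincomb \<Rightarrow> ('k, 'x mtree) lincomb" where
  "lc_graft X Y = lc_bind (\<lambda>a. lc_bind (\<lambda>b. [(1, MNode a b)]) Y) X"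

lemma lc_coeff_graft: "lc_coeff (lc_graft X Y) = mmul (lc_coeff X) (lc_coeff Y)"
proof
  fix T :: "'a mtree"
  show "lc_coeff (lc_graft X Y) T = mmul (lc_coeff X) (lc_coeff Y) T"
  proof (cases T)
    case (MLeaf x)
    then show ?thesis by (simp add: lc_coeff_def lc_graft_def)
  next
    case (MNode a b)
    have "lc_coeff (lc_graft X Y) T
        = lc_sum X (\<lambda>a'. (if a' = a then 1 else 0) * lc_sum Y (\<lambda>b'. if b' = b then 1 else 0))"
      by (simp add: lc_coeff_def lc_graft_def MNode lc_sum_cmult[symmetric])
         (intro lc_sum_cong; simp)
    then show ?thesis by (simp add: lc_coeff_def lc_sum_multc MNode)
  qed
qed

lemma lc_coeff_diff: "lc_coeff (lc_diff X Y) = msub (lc_coeff X) (lc_coeff Y)"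
  by (simp add: fun_eq_iff lc_coeff_def msub_def)

lemma lc_coeff_Nil: "lc_coeff [] = (\<lambda>_. 0)"
  by (simp add: fun_eq_iff lc_coeff_def)

definition left_comb :: "('a \<Rightarrow> 'a \<Rightarrow> 'a) \<Rightarrow> 'a \<Rightarrow> 'a list \<Rightarrow> 'a" where
  "left_comb mul z xs = (case xs of [] \<Rightarrow> z | x # xs' \<Rightarrow> foldl mul x xs')"

definition assoc_op :: "('a \<Rightarrow> 'a \<Rightarrow> 'a) \<Rightarrow> ('a \<Rightarrow> 'a \<Rightarrow> 'a) \<Rightarrow> 'a \<Rightarrow> 'a \<Rightarrow> 'a \<Rightarrow> 'a" where
  "assoc_op mul sub x y z = sub (mul (mul x y) z) (mul x (mul y z))"

definition mu42_op :: "('a \<Rightarrow> 'a \<Rightarrow> 'a) \<Rightarrow> ('a \<Rightarrow> 'a \<Rightarrow> 'a) \<Rightarrow> 'a \<Rightarrow> 'a \<Rightarrow> 'a \<Rightarrow> 'a \<Rightarrow> 'a" where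
  "mu42_op mul sub x1 x2 x3 x4 =
     sub (assoc_op mul sub x1 x2 (mul x3 x4)) (mul (assoc_op mul sub x1 x2 x3) x4)"

(* mu^n_i as in Defs, for an arbitrary product and difference.  The value z of an empty
   left comb never occurs when 1 <= i <= n - 2. *)
definition mu_op :: "('a \<Rightarrow> 'a \<Rightarrow> 'a) \<Rightarrow> ('a \<Rightarrow> 'a \<Rightarrow> 'a) \<Rightarrow> 'a \<Rightarrow> nat \<Rightarrow> 'a list \<Rightarrow> 'a" where
  "mu_op mul sub z i xs = (let n = length xs in
     if i = 1 then assoc_op mul sub (xs ! 0) (left_comb mul z (take (n - 2) (drop 1 xs))) (xs ! (n - 1))
     else mu42_op mul sub (xs ! 0) (left_comb mul z (take (n - i - 1) (drop 1 xs)))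
            (left_comb mul z (take (i - 1) (drop (n - i) xs))) (xs ! (n - 1)))"

lemma mmu_eq_mu_op: "mmu i xs = mu_op mmul msub (\<lambda>_. 0) i xs"
proof -
  have "momega ys = left_comb mmul (\<lambda>_. 0) ys" for ys :: "('a, 'b) mag list"
    by (cases ys) (auto simp: left_comb_def)
  then show ?thesis
    by (simp add: mmu_def mu_op_def Let_def mas_def mmu42_def assoc_op_def mu42_op_def)
qed

lemma mu_op_rel:
  assumes mul: "\<And>a a' b b'. R a a' \<Longrightarrow> R b b' \<Longrightarrow> R (mul a b) (mul' a' b')"
    and sub: "\<And>a a' b b'. R a a' \<Longrightarrow> R b b' \<Longrightarrow> R (sub a b) (sub' a' b')"
    and "R z z'" and xs: "list_all2 R xs ys" and "xs \<noteq> []"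
  shows "R (mu_op mul sub z i xs) (mu_op mul' sub' z' i ys)"
proof -
  have mul_rel: "rel_fun R (rel_fun R R) mul mul'"
    using mul by (auto intro!: rel_funI)
  have comb: "R (left_comb mul z as) (left_comb mul' z' bs)" if "list_all2 R as bs" for as bs
    using that \<open>R z z'\<close>
    by (cases as; cases bs)
       (auto simp: left_comb_def intro: foldl_transfer[THEN rel_funD, THEN rel_funD, THEN rel_funD, OF mul_rel])
  have ends: "R (xs ! 0) (ys ! 0)" "R (xs ! (length xs - 1)) (ys ! (length xs - 1))"
    using \<open>xs \<noteq> []\<close> by (auto intro: list_all2_nthD[OF xs])
  have as: "R (assoc_op mul sub a b c) (assoc_op mul' sub' a' b' c')"
    if "R a a'" "R b b'" "R c c'" for a a' b b' c c'
    unfolding assoc_op_def using that by (intro sub mul)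
  have "R (mu42_op mul sub a b c d) (mu42_op mul' sub' a' b' c' d')"
    if "R a a'" "R b b'" "R c c'" "R d d'" for a a' b b' c c' d d'
    unfolding mu42_op_def using that by (intro sub mul as)
  then show ?thesis
    using as[OF ends(1) comb ends(2)] ends xs
    unfolding mu_op_def Let_def list_all2_lengthD[OF xs, symmetric]
    by (simp add: comb)
qed

type_synonym 'x word = "'x ftree list"

type_synonym ('x, 'k) table = "'x word \<Rightarrow> 'x word \<Rightarrow> ('k, 'x word) lincomb"

definition star_word :: "('x, 'k::field) table \<Rightarrow> 'x word \<Rightarrow> 'x word \<Rightarrow> ('k, 'x word) lincomb" where
  "star_word M u v = (1, u @ v) # concat (map (\<lambda>r. concat (map (\<lambda>j.
       map (\<lambda>(c, w). (c, take r u @ w @ drop j v)) (M (drop r u) (take j v)))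
       [2..<Suc (length v)])) [0..<length u])"

definition star :: "('x, 'k::field) table \<Rightarrow> ('k, 'x word) lincomb \<Rightarrow> ('k, 'x word) lincomb \<Rightarrow> ('k, 'x word) lincomb" where
  "star M X Y = lc_bind (\<lambda>u. lc_bind (star_word M u) Y) X"

definition mu42_star :: "('x, 'k::field) table \<Rightarrow> 'x ftree \<Rightarrow> 'x word \<Rightarrow> 'x word \<Rightarrow> 'x ftree \<Rightarrow> ('k, 'x word) lincomb" where
  "mu42_star M x A B g = mu42_op (star M) lc_diff [(1, [x])] [(1, A)] [(1, B)] [(1, [g])]"

(* corr_upto n agrees with corr on the pairs (a, b) with |a| = 1 or |a| + |b| <= n.  Each entry
   is chosen so that mu^{|a|+|b|}_{|b|}, computed with star corr, sends the letters of ab to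
   a single letter; see assoc_op_star_letters and mu42_star_letters. *)
primrec corr_upto :: "nat \<Rightarrow> ('x, 'k::field) table" where
  "corr_upto 0 a b = (if length a = 1 \<and> 2 \<le> length b then [(-1, [FNode 1 (a @ b)])] else [])"
| "corr_upto (Suc n) a b =
     (if 2 \<le> length a \<and> 2 \<le> length b \<and> length a + length b = Suc n
      then (1, [FNode (length b) (a @ b)]) #
           lc_scale (-1) (mu42_star (corr_upto n) (hd a) (tl a) (butlast b) (last b))
      else corr_upto n a b)"

definition corr :: "('x, 'k::field) table" where
  "corr a b = corr_upto (length a + length b) a b"

lemma lc_sum_star_word:
  "lc_sum (star_word M u v) G = G (u @ v) +
     (\<Sum>r<length u. \<Sum>j\<in>{2..length v}. lc_sum (M (drop r u) (take j v)) (\<lambda>w. G (take r u @ w @ drop j v)))"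
  by (simp del: upt_Suc add: star_word_def lc_sum_concat_map lc_sum_map_basis
      interv_sum_list_conv_sum_set_nat atLeastLessThanSuc_atLeastAtMost lessThan_atLeast0)

lemma star_word_letter_right [simp]: "star_word M u [g] = [(1, u @ [g])]"
  by (simp add: star_word_def)

lemma star_word_cong:
  assumes "\<And>r j. r < length u \<Longrightarrow> 2 \<le> j \<Longrightarrow> j \<le> length v \<Longrightarrow> M (drop r u) (take j v) = M' (drop r u) (take j v)"
  shows "star_word M u v = star_word M' u v"
  unfolding star_word_def using assms
  by (intro arg_cong[where f="\<lambda>x. (1, u @ v) # x"] arg_cong[where f=concat] map_cong refl) auto

lemma star_cong:
  assumes "\<And>u v. u \<in> snd ` set X \<Longrightarrow> v \<in> snd ` set Y \<Longrightarrow> star_word M u v = star_word M' u v"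
  shows "star M X Y = star M' X Y"
  unfolding star_def using assms by (intro lc_bind_cong) auto

lemma lc_sum_star: "lc_sum (star M X Y) G = lc_sum X (\<lambda>u. lc_sum Y (\<lambda>v. lc_sum (star_word M u v) G))"
  by (simp add: star_def)

lemma star_single [simp]: "star M [(1, u)] [(1, v)] = star_word M u v"
  by (simp add: star_def)

lemma star_letter_right: "star M X [(1, [g])] = lc_bind (\<lambda>u. [(1, u @ [g])]) X"
  by (simp add: star_def)

lemma lc_sum_mu42_star: "lc_sum (mu42_star M x A B g) G =
     lc_sum (star M (star_word M [x] A) [(1, B @ [g])]) G
   - lc_sum (star M [(1, [x])] (star_word M A (B @ [g]))) G
   - lc_sum (star M (lc_diff (star M (star_word M [x] A) [(1, B)]) (star M [(1, [x])] (star_word M A B))) [(1, [g])]) G"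
  by (simp add: mu42_star_def mu42_op_def assoc_op_def)

lemma corr_upto_short: "\<not> (2 \<le> length a \<and> 2 \<le> length b) \<Longrightarrow> corr_upto n a b = corr_upto 0 a b"
  by (induction n) auto

lemma corr_upto_long:
  "2 \<le> length a \<Longrightarrow> 2 \<le> length b \<Longrightarrow> corr_upto n a b = (if length a + length b \<le> n then corr a b else [])"
  by (induction n) (auto simp: corr_def)

lemma corr_upto_eq_corr:
  assumes "length a + length b \<le> n \<or> length a = 1"
  shows "corr_upto n a b = corr a b"
proof (cases "2 \<le> length a \<and> 2 \<le> length b")
  case True
  then show ?thesis using assms corr_upto_long[of a b n] by auto
next
  case False
  then show ?thesis unfolding corr_def using corr_upto_short[OF False] by metis
qed

lemma corr_upto_letter_left: "2 \<le> length b \<Longrightarrow> corr_upto n [x] b = [(-1, [FNode 1 (x # b)])]"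
  using corr_upto_short[of "[x]" b n] by simp

lemma corr_letter_left: "2 \<le> length b \<Longrightarrow> corr [x] b = [(-1, [FNode 1 (x # b)])]"
  by (simp add: corr_def corr_upto_letter_left)

lemma corr_Cons:
  "A \<noteq> [] \<Longrightarrow> 2 \<le> length b \<Longrightarrow> corr (x # A) b = (1, [FNode (length b) (x # A @ b)]) #
     lc_scale (-1) (mu42_star (corr_upto (length A + length b)) x A (butlast b) (last b))"
  by (simp add: corr_def Suc_le_eq)

lemma star_word_corr_upto:
  "length u + length v \<le> k \<or> length u = 1 \<Longrightarrow> star_word (corr_upto k) u v = star_word corr u v"
  by (intro star_word_cong corr_upto_eq_corr) auto

lemma lc_sum_star_word_change_top:
  assumes "2 \<le> length v" and "u \<noteq> []"
    and agree: "\<And>r j. r < length u \<Longrightarrow> 2 \<le> j \<Longrightarrow> j \<le> length v \<Longrightarrow> (r, j) \<noteq> (0, length v) \<Longrightarrow>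
        M (drop r u) (take j v) = M' (drop r u) (take j v)"
  shows "lc_sum (star_word M u v) G = lc_sum (star_word M' u v) G + lc_sum (M u v) G - lc_sum (M' u v) G"
proof -
  define F where "F M r j = lc_sum (M (drop r u) (take j v)) (\<lambda>w. G (take r u @ w @ drop j v))" for M r j
  define \<delta> where "\<delta> = F M 0 (length v) - F M' 0 (length v)"
  have "F M r j = F M' r j + (if j = length v then if r = 0 then \<delta> else 0 else 0)"
    if "r < length u" "2 \<le> j" "j \<le> length v" for r j
    using agree[OF that] by (auto simp: F_def \<delta>_def)
  then have "(\<Sum>r<length u. \<Sum>j\<in>{2..length v}. F M r j)
      = (\<Sum>r<length u. \<Sum>j\<in>{2..length v}. F M' r j + (if j = length v then if r = 0 then \<delta> else 0 else 0))"
    by (intro sum.cong) auto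
  also have "\<dots> = (\<Sum>r<length u. \<Sum>j\<in>{2..length v}. F M' r j) + \<delta>"
    using assms(1,2) by (simp add: sum.distrib)
  finally show ?thesis
    by (simp add: lc_sum_star_word F_def \<delta>_def)
qed

lemma lc_sum_star_word_letter_snoc:
  assumes "A \<noteq> []"
  shows "lc_sum (star_word M [x] (A @ [g])) G
       = lc_sum (star_word M [x] A) (\<lambda>u. G (u @ [g])) + lc_sum (M [x] (A @ [g])) G"
proof -
  let ?f = "\<lambda>j. lc_sum (M [x] (take j (A @ [g]))) (\<lambda>w. G (w @ drop j (A @ [g])))"
  have "(\<Sum>j\<in>{2..Suc (length A)}. ?f j) = (\<Sum>j\<in>{2..length A}. ?f j) + ?f (Suc (length A))"
    using assms by (simp add: Suc_le_eq)
  also have "(\<Sum>j\<in>{2..length A}. ?f j)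
      = (\<Sum>j\<in>{2..length A}. lc_sum (M [x] (take j A)) (\<lambda>w. G (w @ drop j A @ [g])))"
    by (intro sum.cong) auto
  finally show ?thesis
    by (simp add: lc_sum_star_word)
qed

lemma assoc_op_star_letters:
  assumes "A \<noteq> []"
  shows "lc_eq (assoc_op (star corr) lc_diff [(1, [x])] [(1, A)] [(1, [g])])
           [(1::'k::field, [FNode 1 (x # A @ [g])])]"
  using assms
  by (simp add: lc_eq_def assoc_op_def lc_sum_star lc_sum_star_word_letter_snoc corr_letter_left Suc_le_eq)

lemma star_word_corr_letter_left:
  obtains Z where "star_word corr [x] A = (1, x # A) # Z" and "\<forall>u\<in>snd ` set Z. length u < length A"
proof
  show "star_word corr [x] A = (1, x # A) # tl (star_word corr [x] A)"
    by (simp add: star_word_def)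
  show "\<forall>u\<in>snd ` set (tl (star_word corr [x] A)). length u < length A"
    by (auto simp: star_word_def corr_letter_left min_def)
qed

(* Of the table entries used by the star products in mu^4_2(x, A, B, g), only corr (xA) (Bg)
   has total length k + 1 and both arguments of length >= 2. *)
lemma lc_sum_mu42_star_corr:
  fixes G :: "'x word \<Rightarrow> 'k::field"
  assumes "A \<noteq> []" and "B \<noteq> []"
  defines "k \<equiv> length A + length B + 1"
  shows "lc_sum (mu42_star corr x A B g) G =
    lc_sum (mu42_star (corr_upto k) x A B g) G + lc_sum (corr (x # A) (B @ [g])) G"
proof -
  obtain Z :: "('k, 'x word) lincomb" where XA: "star_word corr [x] A = (1, x # A) # Z"
    and Z: "\<forall>u\<in>snd ` set Z. length u < length A"
    by (rule star_word_corr_letter_left)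
  have letter_left: "star_word (corr_upto k) [y] v = (star_word corr [y] v :: ('k, 'x word) lincomb)" for y v
    by (simp add: star_word_corr_upto)
  have top: "lc_sum (star_word corr (x # A) (B @ [g])) G
      = lc_sum (star_word (corr_upto k) (x # A) (B @ [g])) G + lc_sum (corr (x # A) (B @ [g])) G"
  proof -
    have "corr_upto k (x # A) (B @ [g]) = ([] :: ('k, 'x word) lincomb)"
      using assms by (simp add: corr_upto_long Suc_le_eq)
    moreover have "lc_sum (star_word corr (x # A) (B @ [g])) G
        = lc_sum (star_word (corr_upto k) (x # A) (B @ [g])) G + lc_sum (corr (x # A) (B @ [g])) G
          - lc_sum (corr_upto k (x # A) (B @ [g])) G"
    proof (rule lc_sum_star_word_change_top)
      fix r j
      assume "r < length (x # A)" "2 \<le> j" "j \<le> length (B @ [g])" "(r, j) \<noteq> (0, length (B @ [g]))"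
      then show "corr (drop r (x # A)) (take j (B @ [g])) = corr_upto k (drop r (x # A)) (take j (B @ [g]))"
        by (intro corr_upto_eq_corr[symmetric]) (auto simp: k_def)
    qed (use assms in \<open>auto simp: Suc_le_eq\<close>)
    ultimately show ?thesis by simp
  qed
  have "lc_sum Z (\<lambda>u. lc_sum (star_word corr u (B @ [g])) G)
      = lc_sum Z (\<lambda>u. lc_sum (star_word (corr_upto k) u (B @ [g])) G)"
    using Z by (intro lc_sum_cong) (auto simp: star_word_corr_upto k_def)
  then have first: "lc_sum (star corr (star_word corr [x] A) [(1, B @ [g])]) G
      = lc_sum (star (corr_upto k) (star_word corr [x] A) [(1, B @ [g])]) G + lc_sum (corr (x # A) (B @ [g])) G"
    by (simp add: XA lc_sum_star top)
  have second: "star corr [(1::'k, [x])] (star_word corr A v) = star (corr_upto k) [(1, [x])] (star_word (corr_upto k) A v)"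
    if "length v \<le> length B + 1" for v
    using that by (auto simp: k_def star_word_corr_upto letter_left intro!: star_cong)
  have third: "star corr (star_word corr [x] A) [(1::'k, B)] = star (corr_upto k) (star_word corr [x] A) [(1, B)]"
    unfolding XA using Z by (intro star_cong) (auto simp: k_def star_word_corr_upto)
  show ?thesis
    by (simp add: lc_sum_mu42_star letter_left first second third star_letter_right)
qed

lemma mu42_star_letters:
  assumes "A \<noteq> []" and "B \<noteq> []"
  shows "lc_eq (mu42_star corr x A B g) [(1::'k::field, [FNode (Suc (length B)) (x # A @ B @ [g])])]"
proof -
  have "corr (x # A) (B @ [g]) = (1::'k, [FNode (Suc (length B)) (x # A @ B @ [g])]) #
      lc_scale (-1) (mu42_star (corr_upto (length A + length B + 1)) x A B g)"
    using corr_Cons[of A "B @ [g]" x] assms by (simp add: Suc_le_eq)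
  then show ?thesis
    by (simp add: lc_eq_def lc_sum_mu42_star_corr[OF assms])
qed

lemma left_comb_star_letters:
  assumes "ws \<noteq> []"
  shows "left_comb (star M) [] (map (\<lambda>t. [(1::'k::field, [t])]) ws) = [(1, ws)]"
proof -
  have "foldl (star M) [(1, u)] (map (\<lambda>t. [(1::'k, [t])]) ws) = [(1, u @ ws)]" for u
    by (induction ws arbitrary: u) auto
  from this[of "[]"] show ?thesis
    using assms by (cases ws) (simp_all add: left_comb_def)
qed

lemma mu_op_star_letters:
  assumes "3 \<le> length ts" and "1 \<le> i" and "i \<le> length ts - 2"
  shows "lc_eq (mu_op (star corr) lc_diff [] i (map (\<lambda>t. [(1::'k::field, [t])]) ts)) [(1, [FNode i ts])]"
proof -
  obtain x ys where "ts = x # ys"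
    using assms by (cases ts) auto
  moreover obtain rest g where "ys = rest @ [g]"
    using assms \<open>ts = x # ys\<close> by (cases ys rule: rev_cases) auto
  ultimately have ts: "ts = x # rest @ [g]" by simp
  show ?thesis
  proof (cases "i = 1")
    case True
    have "rest \<noteq> []" using assms by (auto simp: ts)
    then show ?thesis
      using assoc_op_star_letters[of rest x g]
      by (simp add: True ts mu_op_def left_comb_star_letters nth_append)
  next
    case False
    define A where "A = take (length rest - (i - 1)) rest"
    define B where "B = drop (length rest - (i - 1)) rest"
    have "rest = A @ B" and i: "i = Suc (length B)" and "A \<noteq> []" and "B \<noteq> []"
      using assms False by (auto simp: A_def B_def ts)
    then show ?thesis
      using mu42_star_letters[of A B x g]
      by (simp add: ts i mu_op_def left_comb_star_letters mu42_star_def nth_append)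
  qed
qed

primrec Psi :: "'x mtree \<Rightarrow> ('k::field, 'x word) lincomb" where
  "Psi (MLeaf x) = [(1, [FLeaf x])]"
| "Psi (MNode a b) = star corr (Psi a) (Psi b)"

(* The graph of the linear extension of Psi to Mag(V), up to lc_eq. *)
definition Psi_rel :: "('x, 'k::field) mag \<Rightarrow> ('k, 'x word) lincomb \<Rightarrow> bool" where
  "Psi_rel f Y \<longleftrightarrow> (\<exists>X. f = lc_coeff X \<and> lc_eq (lc_bind Psi X) Y)"

lemma Psi_rel_mmul:
  assumes "Psi_rel a Y1" and "Psi_rel b Y2"
  shows "Psi_rel (mmul a b) (star corr Y1 Y2)"
proof -
  obtain X1 X2 where a: "a = lc_coeff X1" "lc_eq (lc_bind Psi X1) Y1"
    and b: "b = lc_coeff X2" "lc_eq (lc_bind Psi X2) Y2"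
    using assms unfolding Psi_rel_def by blast
  have "lc_sum (lc_bind Psi (lc_graft X1 X2)) G = lc_sum (star corr Y1 Y2) G" for G
  proof -
    have "lc_sum (lc_bind Psi (lc_graft X1 X2)) G
        = lc_sum X1 (\<lambda>s. lc_sum X2 (\<lambda>t. lc_sum (Psi s) (\<lambda>u. lc_sum (Psi t) (\<lambda>v. lc_sum (star_word corr u v) G))))"
      by (simp add: lc_graft_def lc_sum_star)
    also have "\<dots> = lc_sum X1 (\<lambda>s. lc_sum (Psi s) (\<lambda>u. lc_sum X2 (\<lambda>t. lc_sum (Psi t) (\<lambda>v. lc_sum (star_word corr u v) G))))"
      by (intro lc_sum_cong) (rule lc_sum_swap)
    also have "\<dots> = lc_sum (star corr Y1 Y2) G"
      using a(2) b(2) by (simp add: lc_eq_def lc_sum_star)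
    finally show ?thesis .
  qed
  then show ?thesis
    unfolding Psi_rel_def using a(1) b(1)
    by (intro exI[of _ "lc_graft X1 X2"]) (simp add: lc_eq_def lc_coeff_graft)
qed

lemma Psi_rel_msub:
  assumes "Psi_rel a Y1" and "Psi_rel b Y2"
  shows "Psi_rel (msub a b) (lc_diff Y1 Y2)"
proof -
  obtain X1 X2 where a: "a = lc_coeff X1" "lc_eq (lc_bind Psi X1) Y1"
    and b: "b = lc_coeff X2" "lc_eq (lc_bind Psi X2) Y2"
    using assms unfolding Psi_rel_def by blast
  then show ?thesis
    unfolding Psi_rel_def
    by (intro exI[of _ "lc_diff X1 X2"]) (simp add: lc_eq_def lc_diff_def lc_coeff_diff[unfolded lc_diff_def])
qed

lemma Psi_rel_zero: "Psi_rel (\<lambda>_. 0) []"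
  unfolding Psi_rel_def by (intro exI[of _ "[]"]) (simp add: lc_coeff_Nil lc_eq_def lc_bind_def)

lemma Psi_rel_mu_op:
  assumes "list_all2 Psi_rel xs ys" and "xs \<noteq> []"
  shows "Psi_rel (mu_op mmul msub (\<lambda>_. 0) i xs) (mu_op (star corr) lc_diff [] i ys)"
  using Psi_rel_mmul Psi_rel_msub Psi_rel_zero assms by (rule mu_op_rel)

lemma Psi_rel_lc_eq: "Psi_rel f Y \<Longrightarrow> lc_eq Y Y' \<Longrightarrow> Psi_rel f Y'"
  unfolding Psi_rel_def using lc_eq_trans by blast

lemma Psi_rel_feval: "fvalid t \<Longrightarrow> Psi_rel (feval t :: ('x, 'k::field) mag) [(1::'k, [t])]"
proof (induction t)
  case (FLeaf x)
  have "mgen x = lc_coeff [(1::'k, MLeaf x)]"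
    by (simp add: fun_eq_iff mgen_def lc_coeff_def)
  then show ?case
    unfolding Psi_rel_def by (auto simp: lc_eq_def)
next
  case (FNode i ts)
  then have valid: "3 \<le> length ts" "1 \<le> i" "i \<le> length ts - 2" "\<And>t. t \<in> set ts \<Longrightarrow> fvalid t"
    by auto
  have "list_all2 Psi_rel (map feval ts :: ('x, 'k) mag list) (map (\<lambda>t. [(1::'k, [t])]) ts)"
    using FNode.IH valid(4) by (auto simp: list_all2_map1 list_all2_map2 intro!: list.rel_refl_strong)
  then have "Psi_rel (mu_op mmul msub (\<lambda>_. 0) i (map feval ts)) (mu_op (star corr) lc_diff [] i (map (\<lambda>t. [(1::'k, [t])]) ts))"
    using valid(1) by (intro Psi_rel_mu_op) auto
  then show ?case
    unfolding feval.simps mmu_eq_mu_op map_map comp_def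
    using mu_op_star_letters[OF valid(1-3)] by (rule Psi_rel_lc_eq)
qed

definition Psi_coeff :: "'x mtree \<Rightarrow> 'x ftree \<Rightarrow> 'k::field" where
  "Psi_coeff T t = lc_coeff (Psi T) [t]"

definition mag_to_magfine :: "('x, 'k::field) mag \<Rightarrow> 'x ftree \<Rightarrow> 'k" where
  "mag_to_magfine f t = (\<Sum>T | f T \<noteq> 0. f T * Psi_coeff T t)"

lemma finite_support_feval:
  fixes s :: "'x ftree"
  assumes "fvalid s"
  shows "finite {T. (feval s T :: 'k::field) \<noteq> 0}"
proof -
  obtain X :: "('k, 'x mtree) lincomb" where "feval s = lc_coeff X"
    using Psi_rel_feval[OF assms] unfolding Psi_rel_def by blast
  then have "{T. (feval s T :: 'k) \<noteq> 0} \<subseteq> snd ` set X"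
    using lc_coeff_eq_0 by fastforce
  then show ?thesis
    by (rule finite_subset) simp
qed

lemma sum_feval_Psi_coeff:
  fixes s t :: "'x ftree"
  assumes "fvalid s" and "finite U" and "{T. (feval s T :: 'k::field) \<noteq> 0} \<subseteq> U"
  shows "(\<Sum>T\<in>U. feval s T * Psi_coeff T t) = (if s = t then 1 else (0::'k))"
proof -
  obtain X :: "('k, 'x mtree) lincomb" where X: "feval s = lc_coeff X" "lc_eq (lc_bind Psi X) [(1, [s])]"
    using Psi_rel_feval[OF assms(1)] unfolding Psi_rel_def by blast
  have "(if s = t then 1 else 0) = lc_sum (lc_bind Psi X) (\<lambda>w. if w = [t] then 1 else (0::'k))"
    using X(2) by (simp add: lc_eq_def)
  also have "\<dots> = (\<Sum>T\<in>U \<union> snd ` set X. feval s T * Psi_coeff T t)"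
    using assms(2)
    by (simp add: lc_sum_eq_sum_coeff[where U="U \<union> snd ` set X"] X(1) Psi_coeff_def lc_coeff_def)
  also have "\<dots> = (\<Sum>T\<in>U. feval s T * Psi_coeff T t)"
    using assms(2,3) by (intro sum.mono_neutral_right) auto
  finally show ?thesis ..
qed

lemma support_magfine_to_mag:
  fixes c :: "'x ftree \<Rightarrow> 'k::field"
  shows "{T. magfine_to_mag c T \<noteq> 0} \<subseteq> (\<Union>s\<in>{s. c s \<noteq> 0}. {T. (feval s T :: 'k) \<noteq> 0})"
proof
  fix T
  assume "T \<in> {T. magfine_to_mag c T \<noteq> 0}"
  then obtain s where "c s \<noteq> 0" and "c s * feval s T \<noteq> 0"
    unfolding magfine_to_mag_def by (auto elim: sum.not_neutral_contains_not_neutral)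
  then show "T \<in> (\<Union>s\<in>{s. c s \<noteq> 0}. {T. (feval s T :: 'k) \<noteq> 0})"
    by auto
qed

lemma mag_to_magfine_magfine_to_mag:
  fixes c :: "'x ftree \<Rightarrow> 'k::field"
  assumes "c \<in> magfine_elems"
  shows "mag_to_magfine (magfine_to_mag c) = c"
proof
  fix t
  define S where "S = {s. c s \<noteq> 0}"
  define U where "U = (\<Union>s\<in>S. {T. (feval s T :: 'k) \<noteq> 0})"
  have S: "finite S" "\<And>s. s \<in> S \<Longrightarrow> fvalid s"
    using assms by (auto simp: S_def magfine_elems_def)
  have U: "finite U"
    using S by (auto simp: U_def finite_support_feval)
  have "c t = (\<Sum>s\<in>S. if s = t then c s else 0)"
    using S(1) by (simp add: S_def)
  also have "\<dots> = (\<Sum>s\<in>S. c s * (if s = t then 1 else 0))"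
    by (intro sum.cong) auto
  also have "\<dots> = (\<Sum>s\<in>S. c s * (\<Sum>T\<in>U. feval s T * Psi_coeff T t))"
  proof (intro sum.cong refl arg_cong[where f="\<lambda>x. c _ * x"])
    fix s
    assume "s \<in> S"
    then show "(if s = t then 1 else 0) = (\<Sum>T\<in>U. feval s T * (Psi_coeff T t :: 'k))"
      using S U by (intro sum_feval_Psi_coeff[symmetric]) (auto simp: U_def)
  qed
  also have "\<dots> = (\<Sum>s\<in>S. \<Sum>T\<in>U. c s * feval s T * Psi_coeff T t)"
    by (simp add: sum_distrib_left mult.assoc)
  also have "\<dots> = (\<Sum>T\<in>U. \<Sum>s\<in>S. c s * feval s T * Psi_coeff T t)"
    by (rule sum.swap)
  also have "\<dots> = (\<Sum>T\<in>U. magfine_to_mag c T * Psi_coeff T t)"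
    by (simp add: magfine_to_mag_def S_def sum_distrib_right)
  also have "\<dots> = mag_to_magfine (magfine_to_mag c) t"
    unfolding mag_to_magfine_def using U support_magfine_to_mag[of c]
    by (intro sum.mono_neutral_right) (auto simp: U_def S_def)
  finally show "mag_to_magfine (magfine_to_mag c) t = c t" ..
qed

theorem proposition2p9:
  shows "inj_on (magfine_to_mag :: ('x ftree \<Rightarrow> 'k::field) \<Rightarrow> ('x, 'k) mag) magfine_elems"
  by (intro inj_on_inverseI) (rule mag_to_magfine_magfine_to_mag)

end
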